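(* Let $C'=(C'(1),\ldots,C'(c'))$ be a sequence of distinct positive integers and let $S$ be a set of $c$ positive integers, $c\in\{c',c'+1\}$, such that if $s_1<\cdots<s_c$ are the elements of $S$ and $t_1<\cdots<t_{c'}$ are the entries of $C'$ in increasing order, then $s_r\le t_r$ for all $r\le c'$. Then the two-column configuration $(\widehat C,C')$ is HHL.
   Context: A column is a finite sequence of entries listed top to bottom (entry in row $r$ is its $r$-th term). The column $\widehat C=(\widehat C(1),\ldots,\widehat C(c))$ is built from $S$ and $C'$ as follows: every $x\in S\cap C'$ is placed in the row where $x$ occurs in $C'$; if $c=c'+1$, the largest element of $S\setminus C'$ is placed in row $c$; the remaining elements of $S\setminus C'$ (there are exactly $|C'\setminus S|$ of them), taken in decreasing order, are placed in the rows occupied in $C'$ by the elements of $C'\setminus S$ taken in decreasing order (the $k$-th largest next to the $k$-th largest). A two-column configuration $(C,C')$ with left column $C$ of length $c$ and right column $C'$ of length $c'$, $c\in\{c',c'+1\}$, is HHL if the entries of $C$ are distinct, the entries of $C'$ are distinct, $C(j)\ne C'(r)$ whenever $r<j$, and $C(r)\le C'(r)$ for all $r\le c'$. *)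

theory Defs
  imports Main
begin

text \<open>Columns are lists; row r (1-based) of a column is list index r-1 (0-based).\<close>

text \<open>Elements of S not in C' that are used to fill rows of C' occupied by entries of C'\S:
  if c = c'+1 the largest element of S\C' is removed (it goes to the last row).\<close>
definition chat_remaining :: "nat set \<Rightarrow> nat list \<Rightarrow> nat set" where
  "chat_remaining S C' =
     (if card S = length C' + 1 then (S - set C') - {Max (S - set C')} else S - set C')"

text \<open>For x = C'!i not in S, its 0-based rank among C'\S in decreasing order is the number of
  elements of C'\S larger than x; it receives the element of the same rank among the
  remaining elements of S\C' in decreasing order.\<close>
definition chat_entry :: "nat set \<Rightarrow> nat list \<Rightarrow> nat \<Rightarrow> nat" where
  "chat_entry S C' i =
     (if i < length C' then
        (if C' ! i \<in> S then C' ! i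
         else rev (sorted_list_of_set (chat_remaining S C'))
                ! card {y \<in> set C' - S. C' ! i < y})
      else Max (S - set C'))"

definition chat :: "nat set \<Rightarrow> nat list \<Rightarrow> nat list" where
  "chat S C' = map (chat_entry S C') [0..<card S]"

definition HHL :: "nat list \<Rightarrow> nat list \<Rightarrow> bool" where
  "HHL C C' \<longleftrightarrow>
     (length C = length C' \<or> length C = length C' + 1) \<and>
     distinct C \<and> distinct C' \<and>
     (\<forall>r j. r < j \<and> j < length C \<and> r < length C' \<longrightarrow> C ! j \<noteq> C' ! r) \<and>
     (\<forall>r < length C'. C ! r \<le> C' ! r)"

end

theory Submission
  imports Defs
begin

text \<open>Rows of \<open>C'\<close> whose entry lies in \<open>S\<close> keep that entry, and every other entry of
  \<open>\<widehat>C\<close> comes from \<open>S \ C'\<close>; this already gives distinctness and the condition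
  \<open>\<widehat>C(j) \<noteq> C'(r)\<close>. For the row order, let \<open>b \<in> C' \ S\<close> have \<open>m\<close> larger elements in
  \<open>C' \ S\<close>, so that \<open>b\<close> receives the \<open>(m+1)\<close>-st largest remaining element of \<open>S \ C'\<close>.
  This element is at most \<open>b\<close> as soon as at most \<open>m\<close> remaining elements exceed \<open>b\<close>. The
  dominance \<open>s\<^sub>r \<le> t\<^sub>r\<close> says that \<open>S\<close> has at most \<open>c - c'\<close> more elements above \<open>b\<close>
  than \<open>C'\<close> does; cancelling the common part \<open>S \<inter> C'\<close>, the elements of \<open>S \ C'\<close> above
  \<open>b\<close> exceed \<open>m\<close> by at most \<open>c - c'\<close>, and when \<open>c = c' + 1\<close> the discarded maximum of
  \<open>S \ C'\<close> is one of them.\<close>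

lemma card_greater_nth_strict_sorted:
  fixes xs :: "'a::linorder list"
  assumes "sorted_wrt (<) xs" and "i < length xs"
  shows "card {x \<in> set xs. xs ! i < x} = length xs - Suc i"
proof -
  have less_iff: "xs ! i < xs ! j \<longleftrightarrow> i < j" if "j < length xs" for j
    using assms that by (metis not_less_iff_gr_or_eq sorted_wrt_nth_less order.asym)
  have "{x \<in> set xs. xs ! i < x} = (!) xs ` {Suc i..<length xs}"
    using less_iff by (auto simp: in_set_conv_nth)
  moreover have "inj_on ((!) xs) {Suc i..<length xs}"
    using assms(1) by (simp add: inj_on_nth strict_sorted_iff)
  ultimately show ?thesis
    by (simp add: card_image)
qed

lemma card_greater_rev_sorted_list_of_set_nth:
  fixes X :: "'a::linorder set"
  assumes "finite X" and "m < card X"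
  shows "card {x \<in> X. rev (sorted_list_of_set X) ! m < x} = m"
  using assms card_greater_nth_strict_sorted[of "sorted_list_of_set X" "card X - Suc m"]
  by (simp add: rev_nth)

lemma rev_sorted_list_of_set_nth_card_greater:
  fixes X :: "'a::linorder set"
  assumes "finite X" and "b \<in> X"
  shows "rev (sorted_list_of_set X) ! card {x \<in> X. b < x} = b"
proof -
  let ?xs = "sorted_list_of_set X"
  obtain j where j: "j < card X" "b = ?xs ! j"
    using assms by (metis in_set_conv_nth length_sorted_list_of_set set_sorted_list_of_set)
  then have "card {x \<in> X. b < x} = card X - Suc j"
    using assms card_greater_nth_strict_sorted[of ?xs j] by simp
  with j show ?thesis
    by (simp add: rev_nth Suc_diff_Suc)
qed

lemma rev_sorted_list_of_set_nth_mem: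
  fixes X :: "'a::linorder set"
  assumes "finite X" and "m < card X"
  shows "rev (sorted_list_of_set X) ! m \<in> X"
  using assms by (metis length_rev length_sorted_list_of_set nth_mem set_rev set_sorted_list_of_set)

lemma rev_sorted_list_of_set_nth_le:
  fixes X :: "'a::linorder set"
  assumes "finite X" and "m < card X" and "card {x \<in> X. b < x} \<le> m"
  shows "rev (sorted_list_of_set X) ! m \<le> b"
proof (rule ccontr)
  let ?v = "rev (sorted_list_of_set X) ! m"
  assume "\<not> ?v \<le> b"
  moreover have "?v \<in> X"
    using assms(1,2) by (rule rev_sorted_list_of_set_nth_mem)
  ultimately have "insert ?v {x \<in> X. ?v < x} \<subseteq> {x \<in> X. b < x}"
    by auto
  then have "card (insert ?v {x \<in> X. ?v < x}) \<le> card {x \<in> X. b < x}"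
    using assms(1) by (intro card_mono) auto
  moreover have "card (insert ?v {x \<in> X. ?v < x}) = Suc m"
    using assms(1,2) by (simp add: card_greater_rev_sorted_list_of_set_nth)
  ultimately show False
    using assms(3) by simp
qed

lemma card_Collect_Int_Diff:
  assumes "finite A"
  shows "card {x \<in> A. P x} = card {x \<in> A \<inter> B. P x} + card {x \<in> A - B. P x}"
proof -
  have "{x \<in> A. P x} \<inter> B = {x \<in> A \<inter> B. P x}" and "{x \<in> A. P x} - B = {x \<in> A - B. P x}"
    by auto
  then show ?thesis
    using card_Int_Diff[of "{x \<in> A. P x}" B] assms by simp
qed

lemma card_greater_le_if_sorted_dominated:
  fixes X Y :: "'a::linorder set"
  assumes "finite X" "finite Y" "card Y \<le> card X"
    and dominated: "\<forall>r < card Y. sorted_list_of_set X ! r \<le> sorted_list_of_set Y ! r"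
    and "b \<in> Y"
  shows "card {x \<in> X. b < x} + card Y \<le> card {y \<in> Y. b < y} + card X"
proof -
  obtain p where p: "p < card Y" "b = sorted_list_of_set Y ! p"
    using assms(2,5) by (metis in_set_conv_nth length_sorted_list_of_set set_sorted_list_of_set)
  have "{x \<in> X. b < x} \<subseteq> {x \<in> X. sorted_list_of_set X ! p < x}"
    using dominated p by (auto intro: le_less_trans)
  then have "card {x \<in> X. b < x} \<le> card X - Suc p"
    using assms(1,3) p card_mono[of "{x \<in> X. sorted_list_of_set X ! p < x}"]
      card_greater_nth_strict_sorted[of "sorted_list_of_set X" p]
    by simp
  moreover have "card {y \<in> Y. b < y} = card Y - Suc p"
    using assms(2) p card_greater_nth_strict_sorted[of "sorted_list_of_set Y" p] by simp
  ultimately show ?thesis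
    using p assms(3) by linarith
qed

locale hat_column =
  fixes S :: "nat set" and C' :: "nat list"
  assumes distinct_C': "distinct C'"
    and finite_S: "finite S"
    and card_S: "card S = length C' \<or> card S = length C' + 1"
begin

abbreviation fresh :: "nat set" where
  "fresh \<equiv> S - set C'"

abbreviation displaced :: "nat set" where
  "displaced \<equiv> set C' - S"

abbreviation remaining :: "nat set" where
  "remaining \<equiv> chat_remaining S C'"

definition refill :: "nat \<Rightarrow> nat" where
  "refill b = rev (sorted_list_of_set remaining) ! card {y \<in> displaced. b < y}"

lemma card_fresh: "card fresh + length C' = card displaced + card S"
proof -
  have "card S = card (S \<inter> set C') + card fresh"
    using finite_S by (rule card_Int_Diff)
  moreover have "length C' = card (S \<inter> set C') + card displaced"
    using card_Int_Diff[of "set C'" S] distinct_C' by (simp add: distinct_card Int_commute)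
  ultimately show ?thesis
    by simp
qed

lemma remaining_subset_fresh: "remaining \<subseteq> fresh"
  by (auto simp: chat_remaining_def)

lemma Max_fresh:
  assumes "card S = length C' + 1"
  shows "Max fresh \<in> fresh" and "Max fresh \<notin> remaining"
proof -
  have "card fresh > 0"
    using card_fresh assms by simp
  then have "fresh \<noteq> {}"
    by (metis card.empty less_irrefl)
  then show "Max fresh \<in> fresh"
    using finite_S by (intro Max_in) simp_all
  show "Max fresh \<notin> remaining"
    using assms by (simp add: chat_remaining_def)
qed

lemma card_remaining: "card remaining = card displaced"
proof (cases "card S = length C' + 1")
  case True
  then have "card remaining = card fresh - 1"
    using finite_S Max_fresh(1) by (simp add: chat_remaining_def card_Diff_singleton)
  with True show ?thesis
    using card_fresh by simp
next
  case False
  then show ?thesis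
    using card_S card_fresh by (simp add: chat_remaining_def)
qed

lemma card_greater_remaining:
  "card {x \<in> remaining. b < x} = card {x \<in> fresh. b < x} - (card S - length C')"
proof (cases "card S = length C' + 1")
  case True
  let ?F = "{x \<in> fresh. b < x}"
  have "{x \<in> remaining. b < x} = ?F - {Max fresh}"
    using True by (auto simp: chat_remaining_def)
  moreover have "card (?F - {Max fresh}) = card ?F - 1"
  proof (cases "?F = {}")
    case False
    then obtain x where "x \<in> fresh" "b < x"
      by blast
    moreover have "x \<le> Max fresh"
      using finite_S \<open>x \<in> fresh\<close> by (intro Max_ge) simp_all
    ultimately have "Max fresh \<in> ?F"
      using Max_fresh(1)[OF True] by simp
    then show ?thesis
      using finite_S by (simp add: card_Diff_singleton)
  next
    case True
    show ?thesis
      unfolding True by simp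
  qed
  ultimately show ?thesis
    using True by simp
next
  case False
  then show ?thesis
    using card_S by (simp add: chat_remaining_def)
qed

lemma card_greater_displaced_less:
  assumes "b \<in> displaced"
  shows "card {y \<in> displaced. b < y} < card remaining"
proof -
  have "{y \<in> displaced. b < y} \<subset> displaced"
    using assms by auto
  then show ?thesis
    by (simp add: card_remaining psubset_card_mono)
qed

lemma refill_in_remaining:
  assumes "b \<in> displaced"
  shows "refill b \<in> remaining"
proof -
  have "finite remaining"
    using finite_S remaining_subset_fresh finite_subset by blast
  then show ?thesis
    using card_greater_displaced_less[OF assms]
    by (simp add: refill_def rev_sorted_list_of_set_nth_mem)
qed

lemma inj_on_refill: "inj_on refill displaced"
proof (rule inj_onI)
  fix a b assume ab: "a \<in> displaced" "b \<in> displaced" "refill a = refill b"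
  then have "card {y \<in> displaced. a < y} = card {y \<in> displaced. b < y}"
    using card_greater_displaced_less[OF ab(1)] card_greater_displaced_less[OF ab(2)]
    by (simp add: refill_def nth_eq_iff_index_eq)
  then show "a = b"
    using ab(1,2) rev_sorted_list_of_set_nth_card_greater[of displaced] by (metis finite_set finite_Diff)
qed

lemma refill_le:
  assumes dominated: "\<forall>r < length C'. sorted_list_of_set S ! r \<le> sort C' ! r"
    and b: "b \<in> displaced"
  shows "refill b \<le> b"
proof -
  let ?m = "card {y \<in> displaced. b < y}"
  have len: "card (set C') = length C'"
    using distinct_C' by (rule distinct_card)
  have "sort C' = sorted_list_of_set (set C')"
    using distinct_C' by (simp add: sorted_list_of_set_sort_remdups distinct_remdups_id)
  then have "card {x \<in> S. b < x} + length C' \<le> card {y \<in> set C'. b < y} + card S"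
    using card_greater_le_if_sorted_dominated[of S "set C'" b] finite_S card_S dominated b len
    by auto
  moreover have "card {x \<in> S. b < x} = card {x \<in> S \<inter> set C'. b < x} + card {x \<in> fresh. b < x}"
    using finite_S by (rule card_Collect_Int_Diff)
  moreover have "card {y \<in> set C'. b < y} = card {x \<in> set C' \<inter> S. b < x} + ?m"
    by (rule card_Collect_Int_Diff) simp
  ultimately have "card {x \<in> remaining. b < x} \<le> ?m"
    unfolding card_greater_remaining by (simp add: Int_commute)
  then show ?thesis
    unfolding refill_def
    using finite_S remaining_subset_fresh finite_subset card_greater_displaced_less[OF b]
    by (intro rev_sorted_list_of_set_nth_le) auto
qed

lemma length_chat: "length (chat S C') = card S"
  by (simp add: chat_def)

lemma nth_chat:
  assumes "i < card S"
  shows "chat S C' ! i =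
    (if i < length C' then if C' ! i \<in> S then C' ! i else refill (C' ! i) else Max fresh)"
  using assms by (simp add: chat_def chat_entry_def refill_def)

lemma nth_chat_in_set_iff:
  assumes "i < card S"
  shows "chat S C' ! i \<in> set C' \<longleftrightarrow> i < length C' \<and> C' ! i \<in> S"
proof -
  have "refill (C' ! i) \<notin> set C'" if "i < length C'" "C' ! i \<notin> S"
    using that refill_in_remaining[of "C' ! i"] remaining_subset_fresh by auto
  moreover have "Max fresh \<notin> set C'" if "\<not> i < length C'"
    using that assms card_S Max_fresh(1) by fastforce
  ultimately show ?thesis
    using assms by (auto simp: nth_chat)
qed

lemma nth_chat_in_remaining_iff:
  assumes "i < card S" and "\<not> (i < length C' \<and> C' ! i \<in> S)"
  shows "chat S C' ! i \<in> remaining \<longleftrightarrow> i < length C'"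
  using assms card_S refill_in_remaining Max_fresh(2) by (auto simp: nth_chat)

lemma distinct_chat: "distinct (chat S C')"
proof -
  have "i = j" if ij: "i < card S" "j < card S" and eq: "chat S C' ! i = chat S C' ! j" for i j
  proof -
    have kept: "i < length C' \<and> C' ! i \<in> S \<longleftrightarrow> j < length C' \<and> C' ! j \<in> S"
      using nth_chat_in_set_iff ij eq by metis
    show ?thesis
    proof (cases "i < length C' \<and> C' ! i \<in> S")
      case True
      with kept eq ij show ?thesis
        using distinct_C' by (simp add: nth_chat nth_eq_iff_index_eq)
    next
      case not_kept: False
      then have upper: "i < length C' \<longleftrightarrow> j < length C'"
        using kept nth_chat_in_remaining_iff ij eq by metis
      show ?thesis
      proof (cases "i < length C'")
        case True
        with not_kept kept upper eq ij have "refill (C' ! i) = refill (C' ! j)"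
          by (simp add: nth_chat)
        with not_kept kept upper True have "C' ! i = C' ! j"
          using inj_on_refill by (auto dest: inj_onD)
        with upper True show ?thesis
          using distinct_C' by (simp add: nth_eq_iff_index_eq)
      next
        case False
        with upper ij card_S show ?thesis
          by linarith
      qed
    qed
  qed
  then show ?thesis
    by (auto simp: distinct_conv_nth length_chat)
qed

lemma nth_chat_neq:
  assumes "r < j" and "j < card S" and "r < length C'"
  shows "chat S C' ! j \<noteq> C' ! r"
proof (cases "j < length C' \<and> C' ! j \<in> S")
  case True
  then show ?thesis
    using assms distinct_C' by (simp add: nth_chat nth_eq_iff_index_eq)
next
  case False
  then show ?thesis
    using assms nth_chat_in_set_iff by force
qed

lemma nth_chat_le:
  assumes "\<forall>r < length C'. sorted_list_of_set S ! r \<le> sort C' ! r"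
    and "r < length C'"
  shows "chat S C' ! r \<le> C' ! r"
proof -
  have "r < card S"
    using assms(2) card_S by linarith
  then show ?thesis
    using assms refill_le[of "C' ! r"] by (simp add: nth_chat)
qed

end

theorem proposition4p1:
  fixes S :: "nat set" and C' :: "nat list"
  assumes "distinct C'"
    and "\<forall>x \<in> set C'. 0 < x"
    and "finite S"
    and "\<forall>x \<in> S. 0 < x"
    and "card S = length C' \<or> card S = length C' + 1"
    and "\<forall>r < length C'. sorted_list_of_set S ! r \<le> sort C' ! r"
  shows "HHL (chat S C') C'"
proof -
  \<comment> \<open>positivity of the entries is never used\<close>
  interpret hat_column S C'
    using assms(1,3,5) by unfold_locales
  show ?thesis
    unfolding HHL_def
    using assms(1,5,6) length_chat distinct_chat nth_chat_neq nth_chat_le by auto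
qed

end
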